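(* Consider the following slotted system. There are $N\ge2$ users and slots $t=1,\dots,T$. In each slot the BS schedules one user by an arbitrary (possibly randomized) scheduling algorithm. An adversary uses a blocking matrix $\sigma\in\{0,1\}^{N\times T}$, where $\sigma_i(t)=0$ means user $i$ is blocked in slot $t$. Feasibility means $\sum_{i,t}(1-\sigma_i(t))\le\alpha T$ and at most one user is blocked per slot, where $0<\alpha<1$ and $\alpha T\in\mathbb Z$. Ages satisfy $a_i(1)=1$, $a_i(t+1)=1$ if user $i$ is scheduled and not blocked in slot $t$, and $a_i(t+1)=a_i(t)+1$ otherwise. The average age is $\Delta=\frac1T\sum_{t=1}^T\frac1N\sum_i\mathbb E[a_i(t)]$. Then for every scheduling algorithm there exists a feasible blocking matrix under which $\Delta\ge\frac{T\alpha^2}{2N}$. *)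

theory Defs
  imports "HOL-Probability.Probability"
begin

text \<open>Users are indexed 0..<N, slots 1..T. A blocking matrix is
  sigma :: nat => nat => nat, with sigma i t in {0,1}; sigma i t = 0 means
  user i is blocked in slot t.
  A deterministic causal scheduling policy pol maps a slot t and the
  blocking information of all past slots (columns s < t; future entries
  masked to 1) to the scheduled user.\<close>

definition sched :: "(nat \<Rightarrow> (nat \<Rightarrow> nat \<Rightarrow> nat) \<Rightarrow> nat) \<Rightarrow> (nat \<Rightarrow> nat \<Rightarrow> nat) \<Rightarrow> nat \<Rightarrow> nat" where
  "sched pol \<sigma> t = pol t (\<lambda>i s. if s < t then \<sigma> i s else 1)"

text \<open>age_aux pol sigma i n = a_i(n+1).\<close>
fun age_aux :: "(nat \<Rightarrow> (nat \<Rightarrow> nat \<Rightarrow> nat) \<Rightarrow> nat) \<Rightarrow> (nat \<Rightarrow> nat \<Rightarrow> nat) \<Rightarrow> nat \<Rightarrow> nat \<Rightarrow> nat" where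
  "age_aux pol \<sigma> i 0 = 1"
| "age_aux pol \<sigma> i (Suc n) =
     (if sched pol \<sigma> (Suc n) = i \<and> \<sigma> i (Suc n) = 1 then 1 else age_aux pol \<sigma> i n + 1)"

text \<open>age pol sigma i t = a_i(t) for t >= 1.\<close>
definition age :: "(nat \<Rightarrow> (nat \<Rightarrow> nat \<Rightarrow> nat) \<Rightarrow> nat) \<Rightarrow> (nat \<Rightarrow> nat \<Rightarrow> nat) \<Rightarrow> nat \<Rightarrow> nat \<Rightarrow> nat" where
  "age pol \<sigma> i t = age_aux pol \<sigma> i (t - 1)"

definition feasible_blocking :: "nat \<Rightarrow> nat \<Rightarrow> real \<Rightarrow> (nat \<Rightarrow> nat \<Rightarrow> nat) \<Rightarrow> bool" where
  "feasible_blocking N T \<alpha> \<sigma> \<longleftrightarrow>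
     (\<forall>i<N. \<forall>t\<in>{1..T}. \<sigma> i t \<in> {0, 1}) \<and>
     real (\<Sum>i<N. \<Sum>t=1..T. 1 - \<sigma> i t) \<le> \<alpha> * real T \<and>
     (\<forall>t\<in>{1..T}. card {i. i < N \<and> \<sigma> i t = 0} \<le> 1)"

text \<open>Average age under a randomized scheduler: pol \<omega> is the policy used
  for random outcome \<omega> of the probability space M.\<close>
definition avg_age :: "'w measure \<Rightarrow> ('w \<Rightarrow> nat \<Rightarrow> (nat \<Rightarrow> nat \<Rightarrow> nat) \<Rightarrow> nat) \<Rightarrow> nat \<Rightarrow> nat \<Rightarrow> (nat \<Rightarrow> nat \<Rightarrow> nat) \<Rightarrow> real" where
  "avg_age M pol N T \<sigma> =
     (1 / real T) * (\<Sum>t=1..T. (1 / real N) *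
        (\<Sum>i<N. integral\<^sup>L M (\<lambda>\<omega>. real (age (pol \<omega>) \<sigma> i t))))"

end

theory Submission
  imports Defs
begin

text \<open>The adversary spends its whole budget \<open>K = \<alpha> T\<close> on one user, blocking it in the first
  \<open>K\<close> slots. Whatever is scheduled, that user's age in slot \<open>t \<le> K\<close> is then exactly \<open>t\<close>, so
  the ages sum to at least \<open>K (K + 1) / 2 \<ge> (\<alpha> T)\<^sup>2 / 2\<close>, and averaging over \<open>N\<close> users and
  \<open>T\<close> slots gives \<open>T \<alpha>\<^sup>2 / (2 N)\<close>.\<close>

definition block_prefix :: "nat \<Rightarrow> nat \<Rightarrow> nat \<Rightarrow> nat \<Rightarrow> nat" where
  "block_prefix j K = (\<lambda>i t. if i = j \<and> 1 \<le> t \<and> t \<le> K then 0 else 1)"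

lemma age_aux_blocked_prefix:
  assumes "\<And>t. 1 \<le> t \<Longrightarrow> t \<le> K \<Longrightarrow> \<sigma> i t = 0" and "n \<le> K"
  shows "age_aux pol \<sigma> i n = n + 1"
  using assms(2)
proof (induction n)
  case 0
  then show ?case by simp
next
  case (Suc n)
  then show ?case using assms(1)[of "Suc n"] by simp
qed

lemma age_blocked_prefix:
  assumes "\<And>t. 1 \<le> t \<Longrightarrow> t \<le> K \<Longrightarrow> \<sigma> i t = 0" and "1 \<le> t" and "t \<le> K"
  shows "age pol \<sigma> i t = t"
proof -
  have "age_aux pol \<sigma> i (t - 1) = t - 1 + 1"
    by (rule age_aux_blocked_prefix[where K = K]) (use assms in auto)
  then show ?thesis
    using assms(2) by (simp add: age_def)
qed

lemma feasible_blocking_block_prefix: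
  assumes "real K \<le> \<alpha> * real T"
  shows "feasible_blocking N T \<alpha> (block_prefix j K)"
proof -
  have "(\<Sum>i<N. \<Sum>t=1..T. 1 - block_prefix j K i t)
      = (\<Sum>i\<in>{..<N} \<inter> {j}. \<Sum>t=1..T. 1 - block_prefix j K i t)"
    by (rule sum.mono_neutral_right) (auto simp: block_prefix_def)
  also have "\<dots> \<le> (\<Sum>t=1..T. 1 - block_prefix j K j t)"
    by (cases "j < N") auto
  also have "\<dots> = (\<Sum>t\<in>{1..T} \<inter> {1..K}. 1)"
    by (rule sum.mono_neutral_cong_right) (auto simp: block_prefix_def)
  also have "\<dots> \<le> K"
    using card_mono[of "{1..K}" "{1..T} \<inter> {1..K}"] by simp
  finally have budget: "(\<Sum>i<N. \<Sum>t=1..T. 1 - block_prefix j K i t) \<le> K" .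
  have one_per_slot: "card {i. i < N \<and> block_prefix j K i t = 0} \<le> 1" for t
  proof -
    have "{i. i < N \<and> block_prefix j K i t = 0} \<subseteq> {j}"
      by (auto simp: block_prefix_def split: if_splits)
    then show ?thesis
      using card_mono[of "{j}"] by fastforce
  qed
  show ?thesis
    unfolding feasible_blocking_def
  proof (intro conjI)
    show "real (\<Sum>i<N. \<Sum>t=1..T. 1 - block_prefix j K i t) \<le> \<alpha> * real T"
      using budget assms by (meson of_nat_le_iff order_trans)
    show "\<forall>t\<in>{1..T}. card {i. i < N \<and> block_prefix j K i t = 0} \<le> 1"
      using one_per_slot by blast
  qed (simp add: block_prefix_def)
qed

lemma avg_age_ge_user:
  assumes "j < N"
  shows "(\<Sum>t=1..T. integral\<^sup>L M (\<lambda>\<omega>. real (age (pol \<omega>) \<sigma> j t))) / (real N * real T)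
           \<le> avg_age M pol N T \<sigma>"
proof -
  have "integral\<^sup>L M (\<lambda>\<omega>. real (age (pol \<omega>) \<sigma> j t))
          \<le> (\<Sum>i<N. integral\<^sup>L M (\<lambda>\<omega>. real (age (pol \<omega>) \<sigma> i t)))" for t
    by (rule member_le_sum) (use assms in auto)
  then have "(\<Sum>t=1..T. integral\<^sup>L M (\<lambda>\<omega>. real (age (pol \<omega>) \<sigma> j t)))
          \<le> (\<Sum>t=1..T. \<Sum>i<N. integral\<^sup>L M (\<lambda>\<omega>. real (age (pol \<omega>) \<sigma> i t)))"
    by (rule sum_mono)
  moreover have "avg_age M pol N T \<sigma>
      = (\<Sum>t=1..T. \<Sum>i<N. integral\<^sup>L M (\<lambda>\<omega>. real (age (pol \<omega>) \<sigma> i t))) / (real N * real T)"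
    by (simp add: avg_age_def divide_divide_eq_left flip: sum_divide_distrib)
  ultimately show ?thesis
    by (simp add: divide_right_mono)
qed

lemma avg_age_blocked_prefix_ge:
  assumes "prob_space M" and "j < N" and "K \<le> T"
    and blocked: "\<And>t. 1 \<le> t \<Longrightarrow> t \<le> K \<Longrightarrow> \<sigma> j t = 0"
  shows "real K * (real K + 1) / (2 * real N * real T) \<le> avg_age M pol N T \<sigma>"
proof -
  interpret prob_space M by fact
  have "real K * (real K + 1) / 2 = (\<Sum>t=1..K. real t)"
    using double_gauss_sum_from_Suc_0[of K, where 'a = real] by simp
  also have "\<dots> = (\<Sum>t=1..K. integral\<^sup>L M (\<lambda>\<omega>. real (age (pol \<omega>) \<sigma> j t)))"
    by (rule sum.cong) (simp_all add: age_blocked_prefix[of K \<sigma> j, OF blocked] prob_space)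
  also have "\<dots> \<le> (\<Sum>t=1..T. integral\<^sup>L M (\<lambda>\<omega>. real (age (pol \<omega>) \<sigma> j t)))"
    by (rule sum_mono2) (use \<open>K \<le> T\<close> in auto)
  finally have "real K * (real K + 1) / 2 / (real N * real T)
      \<le> (\<Sum>t=1..T. integral\<^sup>L M (\<lambda>\<omega>. real (age (pol \<omega>) \<sigma> j t))) / (real N * real T)"
    by (rule divide_right_mono) simp
  then show ?thesis
    using avg_age_ge_user[OF \<open>j < N\<close>, where M = M and pol = pol and \<sigma> = \<sigma> and T = T]
    by (simp add: mult.assoc)
qed

theorem lemma2:
  fixes M :: "'w measure"
    and pol :: "'w \<Rightarrow> nat \<Rightarrow> (nat \<Rightarrow> nat \<Rightarrow> nat) \<Rightarrow> nat"
    and N T :: nat and \<alpha> :: real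
  assumes "prob_space M"
    and "\<And>\<omega> t h. pol \<omega> t h < N"
    and "\<And>t h. (\<lambda>\<omega>. pol \<omega> t h) \<in> M \<rightarrow>\<^sub>M count_space UNIV"
    and "N \<ge> 2"
    and "0 < \<alpha>" and "\<alpha> < 1"
    and "\<alpha> * real T \<in> \<int>"
  shows "\<exists>\<sigma>. feasible_blocking N T \<alpha> \<sigma> \<and>
           avg_age M pol N T \<sigma> \<ge> real T * \<alpha>^2 / (2 * real N)"
proof -
  have "\<alpha> * real T \<in> \<nat>"
    using assms(5,7) by (simp add: Nats_altdef2)
  then obtain K :: nat where K: "\<alpha> * real T = real K"
    by (auto elim: Nats_cases)
  have "K \<le> T"
    using K assms(6) mult_left_le_one_le[of "real T" \<alpha>] assms(5) by simp
  have "real T * \<alpha>^2 / (2 * real N) = real K * real K / (2 * real N * real T)"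
    by (cases "T = 0") (auto simp: K[symmetric] power2_eq_square)
  also have "\<dots> \<le> real K * (real K + 1) / (2 * real N * real T)"
    by (intro divide_right_mono mult_left_mono) auto
  also have "\<dots> \<le> avg_age M pol N T (block_prefix 0 K)"
    using assms(1,4) \<open>K \<le> T\<close> by (intro avg_age_blocked_prefix_ge) (auto simp: block_prefix_def)
  finally show ?thesis
    using feasible_blocking_block_prefix[of K \<alpha> T N 0] K by auto
qed

end
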